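(* Let $\Lambda=[\mu_1,L_1]\cup[\mu_2,L_2]$ with $0<\mu_1<L_1\le\mu_2<L_2$ and $L_1-\mu_1=L_2-\mu_2$, set $\rho=\frac{L_2+\mu_1}{L_2-\mu_1}$, $R=\frac{\mu_2-L_1}{L_2-\mu_1}$, $m=\left(\frac{\sqrt{\rho^2-R^2}-\sqrt{\rho^2-1}}{\sqrt{1-R^2}}\right)^2$, $h_0=\frac{1+m}{L_1}$, $h_1=\frac{1+m}{\mu_2}$, and $$\sigma_2^\Lambda(\lambda)=\frac{1}{2m}(1+m-\lambda h_0)(1+m-\lambda h_1)-1.$$ Then for every integer $n\ge1$, with $t=2n$, the polynomial $\lambda\mapsto \frac{T_n(\sigma_2^\Lambda(\lambda))}{T_n(\sigma_2^\Lambda(0))}$ is a minimizer of $\sup_{\lambda\in\Lambda}|P(\lambda)|$ over all real polynomials $P$ of degree at most $t$ with $P(0)=1$.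
   Context: $T_n$ denotes the Chebyshev polynomial of the first kind of degree $n$ ($T_0=1$, $T_1(x)=x$, $T_{n+1}=2xT_n-T_{n-1}$). *)

theory Defs
  imports "HOL-Analysis.Analysis" "HOL-Computational_Algebra.Polynomial"
begin

fun cheb_T :: "nat \<Rightarrow> real poly" where
  "cheb_T 0 = 1"
| "cheb_T (Suc 0) = [:0, 1:]"
| "cheb_T (Suc (Suc n)) = [:0, 2:] * cheb_T (Suc n) - cheb_T n"

end

(* The quadratic 2 (x - L1) (x - mu2) / ((L1 - mu1) (mu2 - mu1)) - 1 maps each of the two intervals
   onto [-1, 1]; on the second interval this uses that both have the same length.  The closed form
   m = (sqrt (L1 mu2) - sqrt (L2 mu1)) / (sqrt (L1 mu2) + sqrt (L2 mu1)) shows that the paper's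
   sigma_2 is exactly this quadratic.  Since sigma_2(0) >= 1, Q = T_n o sigma_2 / T_n(sigma_2(0)) has
   sup norm E = 1 / T_n(sigma_2(0)) on Lambda, and it attains +E and -E alternately at 2n + 1
   increasing points of Lambda, the preimages of the extrema cos(i pi / n) of T_n.  A competitor P
   with P(0) = 1, degree at most 2n and smaller sup norm would make Q - P change sign 2n times on
   Lambda and vanish at 0, i.e. have more roots than its degree allows. *)

theory Submission
  imports Defs
begin

section \<open>Chebyshev polynomials\<close>

lemma poly_cheb_T_cos: "poly (cheb_T k) (cos \<theta>) = cos (real k * \<theta>)"
proof (induction k rule: cheb_T.induct)
  case (3 k)
  have "cos (real (Suc (Suc k)) * \<theta>) + cos (real k * \<theta>) = 2 * cos \<theta> * cos (real (Suc k) * \<theta>)"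
    using cos_add[of "real (Suc k) * \<theta>" \<theta>] cos_diff[of "real (Suc k) * \<theta>" \<theta>]
    by (simp add: algebra_simps)
  then show ?case
    using 3 by simp
qed simp_all

lemma abs_poly_cheb_T_le_1:
  assumes "\<bar>x\<bar> \<le> 1"
  shows "\<bar>poly (cheb_T k) x\<bar> \<le> 1"
  using poly_cheb_T_cos[of k "arccos x"] assms by simp

lemma poly_cheb_T_ge_1:
  assumes "1 \<le> x"
  shows "1 \<le> poly (cheb_T k) x"
proof -
  have "1 \<le> poly (cheb_T k) x \<and> poly (cheb_T k) x \<le> poly (cheb_T (Suc k)) x"
  proof (induction k)
    case (Suc k)
    have "2 * poly (cheb_T (Suc k)) x \<le> 2 * x * poly (cheb_T (Suc k)) x"
      using Suc assms by (simp add: mult_right_mono)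
    moreover have "poly (cheb_T (Suc (Suc k))) x
        = 2 * x * poly (cheb_T (Suc k)) x - poly (cheb_T k) x"
      by simp
    ultimately show ?case
      using Suc by linarith
  qed (use assms in simp)
  then show ?thesis ..
qed

lemma degree_cheb_T_le: "degree (cheb_T k) \<le> k"
proof (induction k rule: cheb_T.induct)
  case (3 k)
  have "degree ([:0, 2:] * cheb_T (Suc k)) \<le> Suc (Suc k)"
    using degree_mult_le[of "[:0, 2:]" "cheb_T (Suc k)"] 3 by simp
  then show ?case
    using 3 by (simp add: degree_diff_le)
qed simp_all

section \<open>Equioscillation and optimality\<close>

lemma poly_eq_0_if_sign_changes:
  fixes D :: "real poly" and x :: "nat \<Rightarrow> real"
  assumes "degree D \<le> t" and "poly D 0 = 0" and "0 < x 0"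
    and mono: "\<And>i. i < t \<Longrightarrow> x i \<le> x (Suc i)"
    and sign_change: "\<And>i. i < t \<Longrightarrow> poly D (x i) * poly D (x (Suc i)) < 0"
  shows "D = 0"
proof (rule ccontr)
  assume "D \<noteq> 0"
  have "\<exists>r. x i < r \<and> r < x (Suc i) \<and> poly D r = 0" if "i < t" for i
  proof -
    have "x i \<noteq> x (Suc i)"
      using sign_change[OF that] by (metis not_square_less_zero)
    then have "x i < x (Suc i)"
      using mono[OF that] by simp
    then show ?thesis
      using poly_IVT sign_change[OF that] by blast
  qed
  then obtain r where r: "\<And>i. i < t \<Longrightarrow> x i < r i \<and> r i < x (Suc i) \<and> poly D (r i) = 0"
    by metis
  have x_le: "x i \<le> x j" if "i \<le> j" "j \<le> t" for i j
    using that by (intro lift_Suc_mono_le_ivl[of "{..<t}" x i j] mono) auto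
  have "inj_on r {..<t}"
  proof (rule linorder_inj_onI)
    fix i j assume "i < j" "i \<in> {..<t}" "j \<in> {..<t}"
    then have "r i < x (Suc i)" "x (Suc i) \<le> x j" "x j < r j"
      using r x_le by auto
    then show "r i \<noteq> r j" by simp
  qed linarith
  moreover have "0 \<notin> r ` {..<t}"
    using r x_le[of 0] \<open>0 < x 0\<close> by (fastforce simp: less_le_not_le)
  ultimately have "Suc t = card (insert 0 (r ` {..<t}))"
    by (simp add: card_image)
  also have "\<dots> \<le> card {y. poly D y = 0}"
    using r \<open>poly D 0 = 0\<close> poly_roots_finite[OF \<open>D \<noteq> 0\<close>] by (intro card_mono) auto
  also have "\<dots> \<le> t"
    using card_poly_roots_bound[OF \<open>D \<noteq> 0\<close>] \<open>degree D \<le> t\<close> by simp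
  finally show False by simp
qed

text \<open>If \<open>P\<close> did better than \<open>E\<close> on \<open>K\<close>, then \<open>Q - P\<close> would change sign between consecutive
  points \<open>x i\<close> and also vanish at \<open>0\<close>: \<open>t + 1\<close> roots against degree at most \<open>t\<close>.\<close>
lemma alternation_lower_bound:
  fixes P Q :: "real poly" and x :: "nat \<Rightarrow> real"
  assumes "degree P \<le> t" "degree Q \<le> t" "poly P 0 = poly Q 0" "compact K"
    and "\<And>i. i \<le> t \<Longrightarrow> x i \<in> K" "\<And>i. i < t \<Longrightarrow> x i \<le> x (Suc i)" "0 < x 0"
    and Q_alternates: "\<And>i. i \<le> t \<Longrightarrow> poly Q (x i) = (-1) ^ i * E"
  shows "E \<le> (SUP y\<in>K. \<bar>poly P y\<bar>)"
proof (rule ccontr)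
  assume "\<not> E \<le> (SUP y\<in>K. \<bar>poly P y\<bar>)"
  then have sup_small: "(SUP y\<in>K. \<bar>poly P y\<bar>) < E" by simp
  have bdd: "bdd_above ((\<lambda>y. \<bar>poly P y\<bar>) ` K)"
    by (intro bounded_imp_bdd_above compact_imp_bounded compact_continuous_image
        \<open>compact K\<close> continuous_intros)
  have P_small: "\<bar>poly P (x i)\<bar> < E" if "i \<le> t" for i
    using cSUP_upper[OF assms(5)[OF that] bdd] sup_small by linarith
  define D where "D = Q - P"
  have D_sign: "0 < (-1) ^ i * poly D (x i)" if "i \<le> t" for i
  proof -
    have "\<bar>(-1) ^ i * poly P (x i)\<bar> < E"
      using P_small[OF that] by (simp add: abs_mult)
    then show ?thesis
      unfolding D_def using Q_alternates[OF that] by (simp add: algebra_simps)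
  qed
  have "poly D (x i) * poly D (x (Suc i)) < 0" if "i < t" for i
  proof -
    have "0 < ((-1) ^ i * poly D (x i)) * ((-1) ^ Suc i * poly D (x (Suc i)))"
      using that by (intro mult_pos_pos D_sign) auto
    also have "\<dots> = - (poly D (x i) * poly D (x (Suc i)))"
      by (simp add: algebra_simps flip: power_add)
    finally show ?thesis by simp
  qed
  then have "D = 0"
    using assms(1-3,6,7) by (intro poly_eq_0_if_sign_changes[of D t x])
      (auto simp: D_def degree_diff_le)
  then show False
    using D_sign[of 0] by simp
qed

section \<open>Two intervals of equal length\<close>

lemma one_plus_ratio_power2:
  fixes a b m :: real
  assumes "0 \<le> b" "b < a" "m = (a - b) / (a + b)"
  shows "(1 + m)^2 * (a^2 - b^2) = 4 * m * a^2"
proof -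
  have "(1 + m) * (a + b) = 2 * a" "m * (a + b) = a - b"
    using assms by (simp_all add: field_simps)
  have "(1 + m)^2 * (a^2 - b^2) = ((1 + m) * (a + b)) * (1 + m) * (a - b)"
    by (simp add: power2_eq_square algebra_simps)
  also have "\<dots> = 2 * a * (1 + m) * (m * (a + b))"
    using \<open>(1 + m) * (a + b) = 2 * a\<close> \<open>m * (a + b) = a - b\<close> by simp
  also have "\<dots> = 2 * a * m * ((1 + m) * (a + b))"
    by (simp add: algebra_simps)
  finally show ?thesis
    using \<open>(1 + m) * (a + b) = 2 * a\<close> by (simp add: power2_eq_square)
qed

locale equal_length_intervals =
  fixes \<mu>1 L1 \<mu>2 L2 :: real
  assumes pos: "0 < \<mu>1" and ordered: "\<mu>1 < L1" "L1 \<le> \<mu>2" "\<mu>2 < L2"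
    and equal_length: "L1 - \<mu>1 = L2 - \<mu>2"
begin

lemma L2_eq: "L2 = \<mu>2 + (L1 - \<mu>1)"
  using equal_length by simp

lemma gap_product_pos: "0 < (L1 - \<mu>1) * (\<mu>2 - \<mu>1)"
  using ordered by simp

lemma sqrt_products_diff:
  "sqrt (L1 * \<mu>2)^2 - sqrt (L2 * \<mu>1)^2 = (L1 - \<mu>1) * (\<mu>2 - \<mu>1)"
proof -
  have "sqrt (L1 * \<mu>2)^2 = L1 * \<mu>2" "sqrt (L2 * \<mu>1)^2 = L2 * \<mu>1"
    using pos ordered by simp_all
  then show ?thesis
    by (simp add: L2_eq algebra_simps)
qed

lemma sqrt_products_less: "sqrt (L2 * \<mu>1) < sqrt (L1 * \<mu>2)"
  using sqrt_products_diff gap_product_pos pos ordered by (simp add: L2_eq algebra_simps)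

lemma m_closed_form:
  fixes \<rho> R :: real
  defines "\<rho> \<equiv> (L2 + \<mu>1) / (L2 - \<mu>1)" and "R \<equiv> (\<mu>2 - L1) / (L2 - \<mu>1)"
  shows "((sqrt (\<rho>^2 - R^2) - sqrt (\<rho>^2 - 1)) / sqrt (1 - R^2))^2
    = (sqrt (L1 * \<mu>2) - sqrt (L2 * \<mu>1)) / (sqrt (L1 * \<mu>2) + sqrt (L2 * \<mu>1))"
proof -
  define a b w where "a = sqrt (L1 * \<mu>2)" and "b = sqrt (L2 * \<mu>1)"
    and "w = sqrt ((L1 - \<mu>1) * (\<mu>2 - \<mu>1))"
  define D where "D = L2 - \<mu>1"
  have "0 < D" "0 \<le> a" "0 \<le> b" "0 < w"
    using pos ordered gap_product_pos by (auto simp: D_def a_def b_def w_def)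
  have "a^2 = L1 * \<mu>2" "b^2 = L2 * \<mu>1" "w^2 = (L1 - \<mu>1) * (\<mu>2 - \<mu>1)"
    using pos ordered gap_product_pos by (simp_all add: a_def b_def w_def)
  then have "\<rho>^2 - R^2 = (2 * a / D)^2" "\<rho>^2 - 1 = (2 * b / D)^2" "1 - R^2 = (2 * w / D)^2"
    using \<open>0 < D\<close> by (simp_all add: \<rho>_def R_def D_def L2_eq power_divide field_simps)
      (simp_all add: algebra_simps power2_eq_square)
  then have "sqrt (\<rho>^2 - R^2) = 2 * a / D" "sqrt (\<rho>^2 - 1) = 2 * b / D" "sqrt (1 - R^2) = 2 * w / D"
    using \<open>0 < D\<close> \<open>0 \<le> a\<close> \<open>0 \<le> b\<close> \<open>0 < w\<close> by simp_all
  moreover have "(2 * a / D - 2 * b / D) / (2 * w / D) = (a - b) / w"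
    using \<open>0 < D\<close> \<open>0 < w\<close> by (simp add: field_simps)
  ultimately have "((sqrt (\<rho>^2 - R^2) - sqrt (\<rho>^2 - 1)) / sqrt (1 - R^2))^2 = (a - b)^2 / w^2"
    by (simp add: power_divide)
  also have "\<dots> = (a - b)^2 / ((a - b) * (a + b))"
    using \<open>w^2 = (L1 - \<mu>1) * (\<mu>2 - \<mu>1)\<close> sqrt_products_diff
    by (simp add: a_def b_def power2_eq_square algebra_simps)
  also have "\<dots> = (a - b) / (a + b)"
    using sqrt_products_less by (simp add: a_def b_def power2_eq_square)
  finally show ?thesis
    by (simp add: a_def b_def)
qed

text \<open>The paper's \<open>\<sigma>\<^sub>2\<^sup>\<Lambda>\<close>, normalised by its roots \<open>L1\<close>, \<open>\<mu>2\<close> instead of the step sizes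
  \<open>h0 = (1 + m) / L1\<close>, \<open>h1 = (1 + m) / \<mu>2\<close> (see \<open>step_size_form_eq_sigma\<close>).\<close>
definition sigma :: "real poly" where
  "sigma = smult (2 / ((L1 - \<mu>1) * (\<mu>2 - \<mu>1))) ([:- L1, 1:] * [:- \<mu>2, 1:]) - 1"

lemma poly_sigma: "poly sigma x = 2 * ((x - L1) * (x - \<mu>2)) / ((L1 - \<mu>1) * (\<mu>2 - \<mu>1)) - 1"
  by (simp add: sigma_def add_divide_distrib diff_divide_distrib algebra_simps)

lemma degree_sigma_le: "degree sigma \<le> 2"
proof -
  have "degree ([:- L1, 1:] * [:- \<mu>2, 1:]) \<le> 2"
    using degree_mult_le[of "[:- L1, 1:]" "[:- \<mu>2, 1:]"] by simp
  then show ?thesis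
    by (simp add: sigma_def degree_diff_le)
qed

lemma step_size_form_eq_sigma:
  assumes "m = (sqrt (L1 * \<mu>2) - sqrt (L2 * \<mu>1)) / (sqrt (L1 * \<mu>2) + sqrt (L2 * \<mu>1))"
  shows "smult (1 / (2 * m)) ([:1 + m, - ((1 + m) / L1):] * [:1 + m, - ((1 + m) / \<mu>2):]) - 1 = sigma"
    (is "?step_size_form = _")
proof -
  have "0 \<le> sqrt (L2 * \<mu>1)"
    using pos ordered by simp
  then have "0 < m"
    unfolding assms using sqrt_products_less by (intro divide_pos_pos) linarith+
  have "(1 + m)^2 * ((L1 - \<mu>1) * (\<mu>2 - \<mu>1)) = 4 * m * (L1 * \<mu>2)"
    using one_plus_ratio_power2[OF _ sqrt_products_less assms] sqrt_products_diff pos ordered by simp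
  then have coeff: "(1 + m)^2 / (2 * m * (L1 * \<mu>2)) = 2 / ((L1 - \<mu>1) * (\<mu>2 - \<mu>1))"
    using \<open>0 < m\<close> pos ordered gap_product_pos by (simp add: divide_simps)
  have "poly ?step_size_form x = poly sigma x" for x
  proof -
    have "poly [:1 + m, - ((1 + m) / L1):] x = (1 + m) * (L1 - x) / L1"
      "poly [:1 + m, - ((1 + m) / \<mu>2):] x = (1 + m) * (\<mu>2 - x) / \<mu>2"
      using pos ordered by (simp_all add: field_simps)
    then have "poly ?step_size_form x = (1 + m)^2 / (2 * m * (L1 * \<mu>2)) * ((x - L1) * (x - \<mu>2)) - 1"
      using pos ordered \<open>0 < m\<close>
      by (simp only: poly_diff poly_smult poly_mult poly_1) (simp add: power2_eq_square field_simps)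
    then show ?thesis
      unfolding coeff poly_sigma by simp
  qed
  then show ?thesis
    by (intro poly_eq_poly_eq_iff[THEN iffD1] ext)
qed

lemma abs_poly_sigma_le_1:
  assumes "x \<in> {\<mu>1..L1} \<union> {\<mu>2..L2}"
  shows "\<bar>poly sigma x\<bar> \<le> 1"
proof -
  have "0 \<le> (x - L1) * (x - \<mu>2) \<and> (x - L1) * (x - \<mu>2) \<le> (L1 - \<mu>1) * (\<mu>2 - \<mu>1)"
  proof (cases "x \<le> L1")
    case True
    then have "\<mu>1 \<le> x"
      using assms ordered by auto
    then have "(L1 - x) * (\<mu>2 - x) \<le> (L1 - \<mu>1) * (\<mu>2 - \<mu>1)"
      using True ordered by (intro mult_mono) auto
    moreover have "(x - L1) * (x - \<mu>2) = (L1 - x) * (\<mu>2 - x)"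
      by (simp add: algebra_simps)
    ultimately show ?thesis
      using True ordered by simp
  next
    case False
    then have "\<mu>2 \<le> x" "x \<le> L2"
      using assms by auto
    then have "(x - L1) * (x - \<mu>2) \<le> (L2 - L1) * (L2 - \<mu>2)"
      using ordered by (intro mult_mono) auto
    moreover have "(L2 - L1) * (L2 - \<mu>2) = (L1 - \<mu>1) * (\<mu>2 - \<mu>1)"
      by (simp add: L2_eq algebra_simps)
    moreover have "0 \<le> (x - L1) * (x - \<mu>2)"
      using False \<open>\<mu>2 \<le> x\<close> by simp
    ultimately show ?thesis
      by simp
  qed
  moreover have "\<bar>2 * u / d - 1\<bar> \<le> 1" if "0 \<le> u" "u \<le> d" "0 < d" for u d :: real
    using that by (simp add: abs_le_iff field_simps)
  ultimately show ?thesis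
    unfolding poly_sigma using gap_product_pos by simp
qed

lemma one_le_poly_sigma_0: "1 \<le> poly sigma 0"
proof -
  have "L1 * \<mu>2 - (L1 - \<mu>1) * (\<mu>2 - \<mu>1) = \<mu>1 * (L1 + \<mu>2 - \<mu>1)"
    by (simp add: algebra_simps)
  moreover have "0 \<le> \<mu>1 * (L1 + \<mu>2 - \<mu>1)"
    using pos ordered by simp
  ultimately have "(L1 - \<mu>1) * (\<mu>2 - \<mu>1) \<le> L1 * \<mu>2"
    by linarith
  then show ?thesis
    using gap_product_pos by (simp add: poly_sigma field_simps)
qed

text \<open>\<open>sigma\<close> is symmetric about the midpoint \<open>(L1 + \<mu>2) / 2\<close> of the gap, so the two preimages of
  \<open>y \<in> [-1, 1]\<close> are that midpoint \<open>\<plusminus> preimage_radius y\<close>.\<close>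
definition preimage_radius :: "real \<Rightarrow> real" where
  "preimage_radius y = sqrt (((\<mu>2 - L1) / 2)^2 + (1 + y) * ((L1 - \<mu>1) * (\<mu>2 - \<mu>1)) / 2)"

definition lower_preimage :: "real \<Rightarrow> real" where
  "lower_preimage y = (L1 + \<mu>2) / 2 - preimage_radius y"

definition upper_preimage :: "real \<Rightarrow> real" where
  "upper_preimage y = (L1 + \<mu>2) / 2 + preimage_radius y"

lemma preimage_radius_mono: "y \<le> y' \<Longrightarrow> preimage_radius y \<le> preimage_radius y'"
  unfolding preimage_radius_def using gap_product_pos
  by (intro real_sqrt_le_mono) (simp add: mult_right_mono divide_right_mono)

lemma preimage_radius_bounds:
  assumes "-1 \<le> y" "y \<le> 1"
  shows "(\<mu>2 - L1) / 2 \<le> preimage_radius y" "preimage_radius y \<le> (L2 - \<mu>1) / 2"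
proof -
  have "((\<mu>2 - L1) / 2)^2 + (1 + 1) * ((L1 - \<mu>1) * (\<mu>2 - \<mu>1)) / 2 = ((L2 - \<mu>1) / 2)^2"
    by (simp add: L2_eq power2_eq_square field_simps)
  then have "preimage_radius (-1) = (\<mu>2 - L1) / 2" "preimage_radius 1 = (L2 - \<mu>1) / 2"
    using ordered unfolding preimage_radius_def by simp_all
  then show "(\<mu>2 - L1) / 2 \<le> preimage_radius y" "preimage_radius y \<le> (L2 - \<mu>1) / 2"
    using preimage_radius_mono assms by metis+
qed

lemma poly_sigma_preimage:
  assumes "-1 \<le> y"
  shows "poly sigma (lower_preimage y) = y" "poly sigma (upper_preimage y) = y"
proof -
  have radius_sq: "(preimage_radius y)^2 = ((\<mu>2 - L1) / 2)^2 + (1 + y) * ((L1 - \<mu>1) * (\<mu>2 - \<mu>1)) / 2"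
    unfolding preimage_radius_def using assms gap_product_pos by simp
  have "poly sigma x = y" if "(x - (L1 + \<mu>2) / 2)^2 = (preimage_radius y)^2" for x
  proof -
    have "(x - L1) * (x - \<mu>2) = (x - (L1 + \<mu>2) / 2)^2 - ((\<mu>2 - L1) / 2)^2"
      by (simp add: power2_eq_square field_simps)
    also have "\<dots> = (1 + y) * ((L1 - \<mu>1) * (\<mu>2 - \<mu>1)) / 2"
      unfolding that radius_sq by simp
    finally have "2 * ((x - L1) * (x - \<mu>2)) = (1 + y) * ((L1 - \<mu>1) * (\<mu>2 - \<mu>1))"
      by simp
    then show ?thesis
      using ordered by (simp add: poly_sigma)
  qed
  then show "poly sigma (lower_preimage y) = y" "poly sigma (upper_preimage y) = y"
    by (simp_all add: lower_preimage_def upper_preimage_def)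
qed

lemma preimage_mem:
  assumes "-1 \<le> y" "y \<le> 1"
  shows "lower_preimage y \<in> {\<mu>1..L1}" "upper_preimage y \<in> {\<mu>2..L2}"
  using preimage_radius_bounds[OF assms]
  by (auto simp: lower_preimage_def upper_preimage_def L2_eq field_simps)

text \<open>For \<open>i \<le> n\<close> the preimages of \<open>cos (i \<pi> / n)\<close> run through the first interval, for
  \<open>n < i \<le> 2 n\<close> through the second one, where \<open>cos (i \<pi> / n) = cos ((2 n - i) \<pi> / n)\<close> increases again.
  The value \<open>-1\<close>, taken at both \<open>L1\<close> and \<open>\<mu>2\<close>, is used only once, leaving \<open>2 n + 1\<close> points.\<close>
definition alternation_point :: "nat \<Rightarrow> nat \<Rightarrow> real" where
  "alternation_point n i =
    (if i \<le> n then lower_preimage (cos (i * pi / n)) else upper_preimage (cos (i * pi / n)))"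

lemma alternation_point_mem: "alternation_point n i \<in> {\<mu>1..L1} \<union> {\<mu>2..L2}"
  using preimage_mem[of "cos (i * pi / n)"] by (auto simp: alternation_point_def)

lemma poly_sigma_alternation_point: "poly sigma (alternation_point n i) = cos (i * pi / n)"
  using poly_sigma_preimage by (simp add: alternation_point_def)

lemma alternation_point_le_Suc:
  assumes "1 \<le> n" "i < 2 * n"
  shows "alternation_point n i \<le> alternation_point n (Suc i)"
proof -
  consider "Suc i \<le> n" | "i = n" | "n < i"
    by linarith
  then show ?thesis
  proof cases
    case 1
    have "real (Suc i) * pi \<le> real n * pi"
      using 1 by (intro mult_right_mono) auto
    then have "cos (Suc i * pi / n) \<le> cos (i * pi / n)"
      using assms by (intro cos_monotone_0_pi_le) (auto simp: field_simps)
    then show ?thesis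
      using 1 preimage_radius_mono by (simp add: alternation_point_def lower_preimage_def)
  next
    case 2
    then show ?thesis
      using preimage_mem[of "cos (i * pi / n)"] preimage_mem[of "cos (Suc i * pi / n)"] ordered
      by (auto simp: alternation_point_def)
  next
    case 3
    have cos_shift: "cos (x - 2 * pi) = cos x" for x
      using cos_periodic[of "x - 2 * pi"] by simp
    have "real n * pi \<le> real i * pi" "real (Suc i) * pi \<le> real (2 * n) * pi"
      using 3 assms by (intro mult_right_mono; simp)+
    then have "cos (i * pi / n - 2 * pi) \<le> cos (Suc i * pi / n - 2 * pi)"
      using assms by (intro cos_monotone_minus_pi_0') (auto simp: field_simps)
    then show ?thesis
      using 3 preimage_radius_mono by (simp add: alternation_point_def upper_preimage_def cos_shift)
  qed
qed

definition scaled_chebyshev :: "nat \<Rightarrow> real poly" where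
  "scaled_chebyshev n = smult (1 / poly (cheb_T n) (poly sigma 0)) (pcompose (cheb_T n) sigma)"

lemma degree_scaled_chebyshev_le: "degree (scaled_chebyshev n) \<le> 2 * n"
proof -
  have "degree (pcompose (cheb_T n) sigma) \<le> n * 2"
    using degree_pcompose_le[of "cheb_T n" sigma] degree_cheb_T_le[of n] degree_sigma_le
    by (meson le_trans mult_le_mono)
  then show ?thesis
    by (simp add: scaled_chebyshev_def)
qed

lemma poly_scaled_chebyshev:
  "poly (scaled_chebyshev n) x = poly (cheb_T n) (poly sigma x) / poly (cheb_T n) (poly sigma 0)"
  by (simp add: scaled_chebyshev_def poly_pcompose)

lemma poly_scaled_chebyshev_0: "poly (scaled_chebyshev n) 0 = 1"
  using poly_cheb_T_ge_1[OF one_le_poly_sigma_0, of n] by (simp add: poly_scaled_chebyshev)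

lemma scaled_chebyshev_alternates:
  assumes "1 \<le> n"
  shows "poly (scaled_chebyshev n) (alternation_point n i)
    = (-1) ^ i * (1 / poly (cheb_T n) (poly sigma 0))"
proof -
  have "real n * (i * pi / n) = i * pi"
    using assms by simp
  then show ?thesis
    by (simp add: poly_scaled_chebyshev poly_sigma_alternation_point poly_cheb_T_cos)
qed

lemma SUP_abs_scaled_chebyshev_le:
  "(SUP x\<in>{\<mu>1..L1} \<union> {\<mu>2..L2}. \<bar>poly (scaled_chebyshev n) x\<bar>) \<le> 1 / poly (cheb_T n) (poly sigma 0)"
proof (rule cSUP_least)
  show "{\<mu>1..L1} \<union> {\<mu>2..L2} \<noteq> {}"
    using ordered by auto
  fix x assume "x \<in> {\<mu>1..L1} \<union> {\<mu>2..L2}"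
  then show "\<bar>poly (scaled_chebyshev n) x\<bar> \<le> 1 / poly (cheb_T n) (poly sigma 0)"
    using abs_poly_cheb_T_le_1[OF abs_poly_sigma_le_1] poly_cheb_T_ge_1[OF one_le_poly_sigma_0, of n]
    by (simp add: poly_scaled_chebyshev divide_right_mono)
qed

theorem scaled_chebyshev_minimal:
  assumes "1 \<le> n" "degree P \<le> 2 * n" "poly P 0 = 1"
  shows "(SUP x\<in>{\<mu>1..L1} \<union> {\<mu>2..L2}. \<bar>poly (scaled_chebyshev n) x\<bar>)
    \<le> (SUP x\<in>{\<mu>1..L1} \<union> {\<mu>2..L2}. \<bar>poly P x\<bar>)"
proof -
  have "0 < alternation_point n 0"
    using alternation_point_mem[of n 0] pos ordered by auto
  then have "1 / poly (cheb_T n) (poly sigma 0) \<le> (SUP x\<in>{\<mu>1..L1} \<union> {\<mu>2..L2}. \<bar>poly P x\<bar>)"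
    using assms alternation_point_mem alternation_point_le_Suc scaled_chebyshev_alternates
      degree_scaled_chebyshev_le poly_scaled_chebyshev_0
    by (intro alternation_lower_bound[where Q = "scaled_chebyshev n" and x = "alternation_point n"
          and t = "2 * n"] compact_Un compact_Icc) auto
  then show ?thesis
    using SUP_abs_scaled_chebyshev_le order_trans by blast
qed

end

theorem proposition3:
  fixes \<mu>1 L1 \<mu>2 L2 :: real and n :: nat
  assumes "0 < \<mu>1" "\<mu>1 < L1" "L1 \<le> \<mu>2" "\<mu>2 < L2"
    and "L1 - \<mu>1 = L2 - \<mu>2"
    and "n \<ge> 1"
  defines "\<Lambda> \<equiv> {\<mu>1..L1} \<union> {\<mu>2..L2}"
    and "\<rho> \<equiv> (L2 + \<mu>1) / (L2 - \<mu>1)"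
    and "R \<equiv> (\<mu>2 - L1) / (L2 - \<mu>1)"
  defines "m \<equiv> ((sqrt (\<rho>^2 - R^2) - sqrt (\<rho>^2 - 1)) / sqrt (1 - R^2))^2"
  defines "h0 \<equiv> (1 + m) / L1" and "h1 \<equiv> (1 + m) / \<mu>2"
  defines "\<sigma> \<equiv> smult (1 / (2 * m)) ([:1 + m, - h0:] * [:1 + m, - h1:]) - 1"
  defines "Q \<equiv> smult (1 / poly (cheb_T n) (poly \<sigma> 0)) (pcompose (cheb_T n) \<sigma>)"
  defines "t \<equiv> 2 * n"
  shows "degree Q \<le> t \<and> poly Q 0 = 1 \<and>
    (\<forall>P :: real poly. degree P \<le> t \<and> poly P 0 = 1 \<longrightarrow>
       (SUP x\<in>\<Lambda>. \<bar>poly Q x\<bar>) \<le> (SUP x\<in>\<Lambda>. \<bar>poly P x\<bar>))"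
proof -
  interpret equal_length_intervals \<mu>1 L1 \<mu>2 L2
    using assms(1-5) by unfold_locales
  have "m = (sqrt (L1 * \<mu>2) - sqrt (L2 * \<mu>1)) / (sqrt (L1 * \<mu>2) + sqrt (L2 * \<mu>1))"
    unfolding m_def \<rho>_def R_def by (rule m_closed_form)
  then have "\<sigma> = sigma"
    unfolding \<sigma>_def h0_def h1_def by (rule step_size_form_eq_sigma)
  then have "Q = scaled_chebyshev n"
    by (simp add: Q_def scaled_chebyshev_def)
  then show ?thesis
    using degree_scaled_chebyshev_le poly_scaled_chebyshev_0 scaled_chebyshev_minimal \<open>n \<ge> 1\<close>
    by (simp add: \<Lambda>_def t_def)
qed

end
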